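(* For all $P,Q\in\Gamma_n$, $$0\le \tfrac12 \Delta(P\|Q)\le M_{SG}(P\|Q)\qquad\text{and}\qquad 0\le \tfrac12\xi_{\Delta}(P\|Q)\le \xi_{SG}(P\|Q).$$
   Context: $\Gamma_n=\{P=(p_1,\dots,p_n): p_i>0,\ \sum_i p_i=1\}$, $n\ge2$. For $f:(0,\infty)\to\mathbb{R}$, $C_f(P\|Q)=\sum_{i=1}^n q_i f(p_i/q_i)$; for differentiable $f$, $E_f(P\|Q)=\sum_{i=1}^n (p_i-q_i) f'(p_i/q_i)$ and $\xi_f=E_f-C_f$. With $f_{SG}(x)=\sqrt{(x^2+1)/2}-\sqrt x$ and $f_\Delta(x)=\frac{(x-1)^2}{x+1}$: $M_{SG}=C_{f_{SG}}=\sum_i\big(\sqrt{(p_i^2+q_i^2)/2}-\sqrt{p_iq_i}\big)$, $\Delta=C_{f_\Delta}=\sum_i\frac{(p_i-q_i)^2}{p_i+q_i}$, $\xi_{SG}=\xi_{f_{SG}}$, $\xi_\Delta=\xi_{f_\Delta}$. *)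

theory Defs
  imports "HOL-Analysis.Analysis"
begin

definition Gamma :: "nat \<Rightarrow> (nat \<Rightarrow> real) set" where
  "Gamma n = {p. (\<forall>i\<in>{1..n}. p i > 0) \<and> (\<Sum>i=1..n. p i) = 1}"

definition C_div :: "(real \<Rightarrow> real) \<Rightarrow> nat \<Rightarrow> (nat \<Rightarrow> real) \<Rightarrow> (nat \<Rightarrow> real) \<Rightarrow> real" where
  "C_div f n p q = (\<Sum>i=1..n. q i * f (p i / q i))"

definition E_div :: "(real \<Rightarrow> real) \<Rightarrow> nat \<Rightarrow> (nat \<Rightarrow> real) \<Rightarrow> (nat \<Rightarrow> real) \<Rightarrow> real" where
  "E_div f n p q = (\<Sum>i=1..n. (p i - q i) * deriv f (p i / q i))"

definition xi_div :: "(real \<Rightarrow> real) \<Rightarrow> nat \<Rightarrow> (nat \<Rightarrow> real) \<Rightarrow> (nat \<Rightarrow> real) \<Rightarrow> real" where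
  "xi_div f n p q = E_div f n p q - C_div f n p q"

definition f_SG :: "real \<Rightarrow> real" where
  "f_SG x = sqrt ((x\<^sup>2 + 1) / 2) - sqrt x"

definition f_Delta :: "real \<Rightarrow> real" where
  "f_Delta x = (x - 1)\<^sup>2 / (x + 1)"

definition M_SG :: "nat \<Rightarrow> (nat \<Rightarrow> real) \<Rightarrow> (nat \<Rightarrow> real) \<Rightarrow> real" where
  "M_SG = C_div f_SG"

definition Delta :: "nat \<Rightarrow> (nat \<Rightarrow> real) \<Rightarrow> (nat \<Rightarrow> real) \<Rightarrow> real" where
  "Delta = C_div f_Delta"

definition xi_SG :: "nat \<Rightarrow> (nat \<Rightarrow> real) \<Rightarrow> (nat \<Rightarrow> real) \<Rightarrow> real" where
  "xi_SG = xi_div f_SG"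

definition xi_Delta :: "nat \<Rightarrow> (nat \<Rightarrow> real) \<Rightarrow> (nat \<Rightarrow> real) \<Rightarrow> real" where
  "xi_Delta = xi_div f_Delta"

end

theory Submission
  imports Defs
begin

text \<open>
  Both divergences are Csiszar divergences with positive weights q i, so both inequalities
  follow from pointwise inequalities between the generating functions; for \<open>\<xi>\<^sub>f\<close> the
  generator is \<open>(x - 1) f'(x) - f(x)\<close>. With \<open>s = \<surd>((x\<^sup>2 + 1)/2)\<close> and \<open>t = \<surd>x\<close> one has
  \<open>s\<^sup>2 + t\<^sup>2 = (x + 1)\<^sup>2/2\<close> and \<open>s\<^sup>2 - t\<^sup>2 = (x - 1)\<^sup>2/2\<close>, hence
  \<open>f_SG x = (x - 1)\<^sup>2/(2(s + t))\<close>, while \<open>f_\<Delta> x = (x - 1)\<^sup>2/(x + 1)\<close>; the comparisons then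
  reduce to \<open>s + t \<le> x + 1\<close> and \<open>4st \<le> (x + 1)\<^sup>2\<close>, i.e. to the quadratic-mean inequality.
\<close>

definition xi_fun :: "(real \<Rightarrow> real) \<Rightarrow> real \<Rightarrow> real" where
  "xi_fun f x = (x - 1) * deriv f x - f x"

lemma C_div_mono:
  assumes "\<forall>i\<in>{1..n}. p i > 0 \<and> q i > 0" and "\<And>x. x > 0 \<Longrightarrow> f x \<le> g x"
  shows "C_div f n p q \<le> C_div g n p q"
  unfolding C_div_def
proof (rule sum_mono)
  fix i assume "i \<in> {1..n}"
  with assms(1) have "p i > 0" "q i > 0" by auto
  with assms(2) show "q i * f (p i / q i) \<le> q i * g (p i / q i)" by simp
qed

lemma C_div_nonneg:
  assumes "\<forall>i\<in>{1..n}. p i > 0 \<and> q i > 0" and "\<And>x. x > 0 \<Longrightarrow> 0 \<le> f x"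
  shows "0 \<le> C_div f n p q"
  using C_div_mono [of n p q "\<lambda>_. 0" f] assms by (simp add: C_div_def)

lemma C_div_divide: "C_div f n p q / c = C_div (\<lambda>x. f x / c) n p q"
  by (simp add: C_div_def sum_divide_distrib)

lemma xi_div_eq_C_div_xi_fun:
  assumes "\<forall>i\<in>{1..n}. q i > 0"
  shows "xi_div f n p q = C_div (xi_fun f) n p q"
proof -
  have "(p i - q i) * deriv f (p i / q i) - q i * f (p i / q i)
      = q i * xi_fun f (p i / q i)" if "i \<in> {1..n}" for i
  proof -
    from assms that have "q i > 0" by auto
    then show ?thesis by (simp add: xi_fun_def field_simps)
  qed
  then show ?thesis
    unfolding xi_div_def E_div_def C_div_def by (simp add: sum_subtractf [symmetric])
qed

lemma deriv_f_SG:
  fixes x :: real assumes "x > 0"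
  shows "deriv f_SG x = x / (2 * sqrt ((x\<^sup>2 + 1) / 2)) - 1 / (2 * sqrt x)"
proof -
  have "(x\<^sup>2 + 1) / 2 > 0" by (simp add: add_nonneg_pos)
  then have "(f_SG has_real_derivative
      inverse (sqrt ((x\<^sup>2 + 1) / 2)) / 2 * (2 * x / 2) - inverse (sqrt x) / 2) (at x)"
    unfolding f_SG_def [abs_def] using assms by (auto intro!: derivative_eq_intros)
  from DERIV_imp_deriv [OF this] show ?thesis by (simp add: field_simps)
qed

lemma deriv_f_Delta:
  fixes x :: real assumes "x \<noteq> -1"
  shows "deriv f_Delta x = (x - 1) * (x + 3) / (x + 1)\<^sup>2"
proof -
  have "x + 1 \<noteq> 0" using assms by linarith
  then have "(f_Delta has_real_derivative
      (2 * (x - 1) * (x + 1) - (x - 1)\<^sup>2) / (x + 1)\<^sup>2) (at x)"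
    unfolding f_Delta_def [abs_def] by (auto intro!: derivative_eq_intros simp: power2_eq_square)
  from DERIV_imp_deriv [OF this] show ?thesis by (simp add: power2_eq_square algebra_simps)
qed

lemma sqrt_mean_bounds:
  fixes x :: real assumes "x \<ge> 0"
  defines "s \<equiv> sqrt ((x\<^sup>2 + 1) / 2)" and "t \<equiv> sqrt x"
  shows "s + t \<le> x + 1" and "4 * s * t \<le> (x + 1)\<^sup>2"
proof -
  have "s\<^sup>2 + t\<^sup>2 = (x + 1)\<^sup>2 / 2"
    using assms by (simp add: power2_eq_square field_simps)
  moreover have "(s + t)\<^sup>2 = s\<^sup>2 + t\<^sup>2 + 2 * s * t" by (rule power2_sum)
  moreover have "2 * s * t \<le> s\<^sup>2 + t\<^sup>2" by (rule sum_squares_bound)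
  ultimately have "(s + t)\<^sup>2 \<le> (x + 1)\<^sup>2" and "4 * s * t \<le> (x + 1)\<^sup>2" by linarith+
  then show "s + t \<le> x + 1" and "4 * s * t \<le> (x + 1)\<^sup>2"
    using assms by (auto intro: power2_le_imp_le)
qed

lemma f_SG_eq:
  fixes x :: real assumes "x > 0"
  defines "s \<equiv> sqrt ((x\<^sup>2 + 1) / 2)" and "t \<equiv> sqrt x"
  shows "f_SG x = (x - 1)\<^sup>2 / (2 * (s + t))"
proof -
  have "s + t > 0" using assms by (simp add: add_pos_nonneg)
  moreover have "(s - t) * (s + t) = (x - 1)\<^sup>2 / 2"
    using assms by (simp add: power2_eq_square algebra_simps)
  ultimately have "s - t = (x - 1)\<^sup>2 / (2 * (s + t))" by (simp add: field_simps)
  then show ?thesis by (simp add: f_SG_def s_def t_def)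
qed

lemma f_Delta_nonneg: "x > -1 \<Longrightarrow> 0 \<le> f_Delta x"
  by (simp add: f_Delta_def)

lemma half_f_Delta_le_f_SG:
  fixes x :: real assumes "x > 0"
  shows "f_Delta x / 2 \<le> f_SG x"
proof -
  have "f_Delta x / 2 = (x - 1)\<^sup>2 / (2 * (x + 1))" by (simp add: f_Delta_def)
  also have "\<dots> \<le> (x - 1)\<^sup>2 / (2 * (sqrt ((x\<^sup>2 + 1) / 2) + sqrt x))"
    using assms sqrt_mean_bounds(1) [of x]
    by (intro divide_left_mono mult_pos_pos) (auto simp: add_nonneg_pos)
  also have "\<dots> = f_SG x" using f_SG_eq [OF assms] by simp
  finally show ?thesis .
qed

lemma xi_fun_f_Delta:
  fixes x :: real assumes "x \<noteq> -1"
  shows "xi_fun f_Delta x = 2 * (x - 1)\<^sup>2 / (x + 1)\<^sup>2"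
proof -
  have "x + 1 \<noteq> 0" using assms by linarith
  then show ?thesis
    using assms by (simp add: xi_fun_def deriv_f_Delta f_Delta_def divide_simps)
      (simp add: power2_eq_square algebra_simps)
qed

lemma xi_fun_f_Delta_nonneg: "x > -1 \<Longrightarrow> 0 \<le> xi_fun f_Delta x"
  by (simp add: xi_fun_f_Delta)

lemma xi_fun_f_SG:
  fixes x :: real assumes "x > 0"
  defines "s \<equiv> sqrt ((x\<^sup>2 + 1) / 2)" and "t \<equiv> sqrt x"
  shows "xi_fun f_SG x = (x + 1) * (x - 1)\<^sup>2 / (4 * s * t * (s + t))"
proof -
  have pos: "s > 0" "t > 0" using assms by (simp_all add: add_nonneg_pos)
  have s2: "s\<^sup>2 = (x\<^sup>2 + 1) / 2" and t2: "t\<^sup>2 = x" using assms by simp_all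
  have "xi_fun f_SG x * (2 * s * t) = (x - 1) * (x * t - s) - 2 * s * t * (s - t)"
    using assms pos by (simp add: xi_fun_def deriv_f_SG f_SG_def field_simps)
  also have "\<dots> = (x + 1) * (s - t) + 2 * s * (t\<^sup>2 - x) - t * (2 * s\<^sup>2 - (x\<^sup>2 + 1))"
    by (simp add: power2_eq_square algebra_simps)
  also have "\<dots> = (x + 1) * (x - 1)\<^sup>2 / (2 * (s + t))"
    using f_SG_eq [OF assms(1)] s2 t2 by (simp add: f_SG_def s_def t_def)
  finally have "xi_fun f_SG x * (4 * s * t * (s + t)) = (x + 1) * (x - 1)\<^sup>2"
    using pos by (simp add: field_simps)
  moreover have "4 * s * t * (s + t) \<noteq> 0" using pos by simp
  ultimately show ?thesis by (simp add: eq_divide_imp)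
qed

lemma half_xi_fun_f_Delta_le_xi_fun_f_SG:
  fixes x :: real assumes "x > 0"
  shows "xi_fun f_Delta x / 2 \<le> xi_fun f_SG x"
proof -
  define s where "s = sqrt ((x\<^sup>2 + 1) / 2)"
  define t where "t = sqrt x"
  have pos: "s > 0" "t > 0" "x + 1 > 0" using assms by (simp_all add: s_def t_def add_nonneg_pos)
  have "4 * s * t * (s + t) \<le> (x + 1)\<^sup>2 * (x + 1)"
    using assms pos sqrt_mean_bounds [of x] by (intro mult_mono) (auto simp: s_def t_def)
  then have "(x + 1) * (x - 1)\<^sup>2 / ((x + 1)\<^sup>2 * (x + 1))
      \<le> (x + 1) * (x - 1)\<^sup>2 / (4 * s * t * (s + t))"
    using pos by (intro divide_left_mono) auto
  moreover have "xi_fun f_Delta x / 2 = (x + 1) * (x - 1)\<^sup>2 / ((x + 1)\<^sup>2 * (x + 1))"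
    using assms by (simp add: xi_fun_f_Delta power2_eq_square)
  ultimately show ?thesis using xi_fun_f_SG [OF assms] by (simp add: s_def t_def)
qed

theorem proposition5p3:
  fixes n :: nat and p q :: "nat \<Rightarrow> real"
  assumes "n \<ge> 2" and "p \<in> Gamma n" and "q \<in> Gamma n"
  shows "0 \<le> Delta n p q / 2 \<and> Delta n p q / 2 \<le> M_SG n p q
    \<and> 0 \<le> xi_Delta n p q / 2 \<and> xi_Delta n p q / 2 \<le> xi_SG n p q"
proof -
  have pos: "\<forall>i\<in>{1..n}. p i > 0 \<and> q i > 0"
    using assms(2,3) by (simp add: Gamma_def)
  then have xi: "xi_div f n p q = C_div (xi_fun f) n p q" for f
    by (simp add: xi_div_eq_C_div_xi_fun)
  have "0 \<le> Delta n p q / 2" "Delta n p q / 2 \<le> M_SG n p q"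
    unfolding Delta_def M_SG_def C_div_divide
    using pos f_Delta_nonneg half_f_Delta_le_f_SG
    by (auto intro!: C_div_nonneg C_div_mono)
  moreover have "0 \<le> xi_Delta n p q / 2" "xi_Delta n p q / 2 \<le> xi_SG n p q"
    unfolding xi_Delta_def xi_SG_def xi C_div_divide
    using pos xi_fun_f_Delta_nonneg half_xi_fun_f_Delta_le_xi_fun_f_SG
    by (auto intro!: C_div_nonneg C_div_mono)
  ultimately show ?thesis by blast
qed

end
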